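(* For all $t\in\mathbb R$, $\varepsilon>0$, $\gamma>0$, $$\Big|\sum_{k=1}^n\big(f_k(t)-1+\sigma_k^2t^2/2\big)\Big|\le p_E(t,\varepsilon,\gamma)\,L_{E,n}^3(\varepsilon,\gamma),\qquad \Big|\sum_{k=1}^n\big(f_k(t)-1+\sigma_k^2t^2/2\big)\Big|\le p_R(t,\varepsilon,\gamma)\,L_{R,n}^3(\varepsilon,\gamma),$$ where $$p_E(t,\varepsilon,\gamma)=t^2\min_{0<z\le\varepsilon}\Big[\frac{zt^2}{12}+\max\Big\{\frac{|t|}{6\gamma},\frac\varkappa z-\frac{zt^2}{24}\Big\}\Big],\qquad p_R(t,\varepsilon,\gamma)=t^2\max\Big\{\frac{|t|}{6\gamma},\frac\varkappa\varepsilon+\frac{\varepsilon t^2}{24},\frac{\varepsilon t^2}{12}\Big\}.$$ Moreover: $p_E(t,\varepsilon,\gamma)=\frac{\varkappa t^2}\varepsilon+\frac{\varepsilon t^4}{24}$ if $\varepsilon|t|\le t_\gamma$ and $=\frac{\sqrt{6\varkappa\gamma^2+1}}{6\gamma}|t|^3$ if $\varepsilon|t|>t_\gamma$; for $\gamma\ge\gamma_*$, $p_R(t,\varepsilon,\gamma)=\frac{\varkappa t^2}\varepsilon+\frac{\varepsilon t^4}{24}$ if $\varepsilon|t|\le t_\infty$ and $=\frac{\varepsilon t^4}{12}$ if $\varepsilon|t|>t_\infty$; for $\gamma<\gamma_*$, $p_R(t,\varepsilon,\gamma)$ equals $\frac{\varkappa t^2}\varepsilon+\frac{\varepsilon t^4}{24}$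 for $\varepsilon|t|\le t_{1,\gamma}$, $\frac{|t|^3}{6\gamma}$ for $t_{1,\gamma}<\varepsilon|t|\le t_{2,\gamma}$, and $\frac{\varepsilon t^4}{12}$ for $\varepsilon|t|>t_{2,\gamma}$; and $p_R(t,\varepsilon,\gamma)=p_R(t,\varepsilon,\min\{\gamma,\gamma_*\})$. The functions $t_\gamma$ and $t_{1,\gamma}$ are monotonically increasing in $\gamma$, with $t_\gamma\le t_{1,\gamma}\le t_\infty$ for all $\gamma>0$; $p_E$ and $p_R$ are monotonically decreasing in $\gamma>0$, $p_R$ does not depend on $\gamma$ for $\gamma\ge\gamma_*$, and $p_E$ is also monotonically decreasing in $\varepsilon$.
   Context: $X_1,\dots,X_n$ are independent real random variables with $\mathbb E X_k=0$, $\sigma_k^2=\mathbb E X_k^2<\infty$, normalized so that $\sum_k\sigma_k^2=1$; $f_k(t)=\mathbb E e^{itX_k}$. For $z\ge0$, $L_n(z)=\sum_k\mathbb E X_k^2\mathbf 1(|X_k|\ge z)$; for $z>0$, $M_n(z)=\sum_k\mathbb E X_k^3\mathbf 1(|X_k|<z)$. $L_{E,n}^3(\varepsilon,\gamma)=\sup_{0<z\le\varepsilon}\{\gamma|M_n(z)|+zL_n(z)\}$ and $L_{R,n}^3(\varepsilon,\gamma)=\gamma|M_n(\varepsilon)|+\sup_{0<z\le\varepsilon}zL_n(z)$. The constant $\varkappa=0.531551\ldots$ is $\sup_{x>0}x^{-2}\sqrt{(\cos x-1+x^2/2)^2+(\sin x-x)^2}$, and $\gamma_*=1/\sqrt{6\varkappa}=0.5599\ldots$.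 Further $t_\gamma=\frac2\gamma(\sqrt{(\gamma/\gamma_* )^2+1}-1)$, $t_\infty=\lim_{\gamma\to\infty}t_\gamma=2/\gamma_*$, $t_{2,\gamma}=2\max\{\gamma^{-1},\gamma_*^{-1}\}$, $t_{1,\gamma}=t_{2,\gamma}(1-\sqrt{(1-(\gamma/\gamma_* )^2)_+})$. *)

theory Defs
  imports "HOL-Probability.Probability"
begin

definition chf :: "'a measure \<Rightarrow> (nat \<Rightarrow> 'a \<Rightarrow> real) \<Rightarrow> nat \<Rightarrow> real \<Rightarrow> complex" where
  "chf M X k t = char (distr M borel (X k)) t"

definition sig2 :: "'a measure \<Rightarrow> (nat \<Rightarrow> 'a \<Rightarrow> real) \<Rightarrow> nat \<Rightarrow> real" where
  "sig2 M X k = (\<integral>\<omega>. (X k \<omega>)^2 \<partial>M)"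

definition Ln :: "'a measure \<Rightarrow> (nat \<Rightarrow> 'a \<Rightarrow> real) \<Rightarrow> nat \<Rightarrow> real \<Rightarrow> real" where
  "Ln M X n z = (\<Sum>k=1..n. \<integral>\<omega>. (X k \<omega>)^2 * indicator {x. \<bar>x\<bar> \<ge> z} (X k \<omega>) \<partial>M)"

definition Mn :: "'a measure \<Rightarrow> (nat \<Rightarrow> 'a \<Rightarrow> real) \<Rightarrow> nat \<Rightarrow> real \<Rightarrow> real" where
  "Mn M X n z = (\<Sum>k=1..n. \<integral>\<omega>. (X k \<omega>)^3 * indicator {x. \<bar>x\<bar> < z} (X k \<omega>) \<partial>M)"

definition LE3 :: "'a measure \<Rightarrow> (nat \<Rightarrow> 'a \<Rightarrow> real) \<Rightarrow> nat \<Rightarrow> real \<Rightarrow> real \<Rightarrow> real" where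
  "LE3 M X n \<epsilon> \<gamma> = (SUP z\<in>{0<..\<epsilon>}. \<gamma> * \<bar>Mn M X n z\<bar> + z * Ln M X n z)"

definition LR3 :: "'a measure \<Rightarrow> (nat \<Rightarrow> 'a \<Rightarrow> real) \<Rightarrow> nat \<Rightarrow> real \<Rightarrow> real \<Rightarrow> real" where
  "LR3 M X n \<epsilon> \<gamma> = \<gamma> * \<bar>Mn M X n \<epsilon>\<bar> + (SUP z\<in>{0<..\<epsilon>}. z * Ln M X n z)"

definition kappa :: real where
  "kappa = (SUP x\<in>{0<..}. sqrt ((cos x - 1 + x^2/2)^2 + (sin x - x)^2) / x^2)"

definition gamma_star :: real where
  "gamma_star = 1 / sqrt (6 * kappa)"

definition t_gam :: "real \<Rightarrow> real" where
  "t_gam \<gamma> = 2 / \<gamma> * (sqrt ((\<gamma> / gamma_star)^2 + 1) - 1)"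

text \<open>t_infinity = lim_{gamma -> infinity} t_gamma = 2 / gamma_star\<close>
definition t_inf :: real where
  "t_inf = 2 / gamma_star"

definition t2_gam :: "real \<Rightarrow> real" where
  "t2_gam \<gamma> = 2 * max (1 / \<gamma>) (1 / gamma_star)"

definition t1_gam :: "real \<Rightarrow> real" where
  "t1_gam \<gamma> = t2_gam \<gamma> * (1 - sqrt (max 0 (1 - (\<gamma> / gamma_star)^2)))"

definition pE_aux :: "real \<Rightarrow> real \<Rightarrow> real \<Rightarrow> real" where
  "pE_aux t \<gamma> z = z * t^2 / 12 + max (\<bar>t\<bar> / (6 * \<gamma>)) (kappa / z - z * t^2 / 24)"

definition pE :: "real \<Rightarrow> real \<Rightarrow> real \<Rightarrow> real" where
  "pE t \<epsilon> \<gamma> = t^2 * (INF z\<in>{0<..\<epsilon>}. pE_aux t \<gamma> z)"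

definition pR :: "real \<Rightarrow> real \<Rightarrow> real \<Rightarrow> real" where
  "pR t \<epsilon> \<gamma> = t^2 * max (\<bar>t\<bar> / (6 * \<gamma>)) (max (kappa / \<epsilon> + \<epsilon> * t^2 / 24) (\<epsilon> * t^2 / 12))"

end

theory Submission
  imports Defs
begin

(* Fix a truncation level z.  On {|X| < z} the third-order Taylor remainder of e^{iu} is at
   most u^4/24, and on {|X| >= z} the second-order remainder is at most kappa u^2 (this is
   how kappa is defined).  Together with E X = 0 this gives, summand by summand,
     |sum_k (f_k(t) - 1 + sigma_k^2 t^2/2)|
        <= |t|^3/6 |M_n(z)| + t^4/24 sum_k E X_k^4 1(|X_k| < z) + kappa t^2 L_n(z).
   The layer-cake identity E X^2 min(X^2, z^2) = int_0^z 2u E X^2 1(|X| >= u) du bounds the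
   fourth-moment term by 2 z sup_{u <= z} u L_n(u) - z^2 L_n(z).  Regrouping against L_E^3
   (at the minimizing z <= eps) or against L_R^3 (at z = eps) yields the two bounds.

   The closed forms are one-variable calculus: t_gam is the positive root of
   s^2/24 + s/(6 gamma) = kappa, which locates the minimizer of p_E, and for gamma < gamma_star
   t1_gam is the smaller root of kappa + s^2/24 = s/(6 gamma), where the first two entries of
   the maximum defining p_R cross. *)

section \<open>The constant kappa\<close>

lemma norm_iexp_taylor2_remainder:
  "cmod (iexp u - 1 - \<i> * complex_of_real u + complex_of_real (u^2/2))
     = sqrt ((cos u - 1 + u^2/2)^2 + (sin u - u)^2)"
proof -
  have "iexp u - 1 - \<i> * complex_of_real u + complex_of_real (u^2/2)
        = Complex (cos u - 1 + u^2/2) (sin u - u)"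
    by (simp add: complex_eq_iff exp_Euler cos_of_real sin_of_real Re_exp Im_exp)
  then show ?thesis by (simp add: norm_complex_def)
qed

lemma norm_iexp_taylor2_remainder_le_sq:
  "cmod (iexp u - 1 - \<i> * complex_of_real u + complex_of_real (u^2/2)) \<le> u^2"
proof -
  have taylor1: "cmod (iexp u - (\<Sum>k \<le> 1. (\<i> * u)^k / fact k)) \<le> \<bar>u\<bar>^2 / 2"
    using iexp_approx1[of u 1] by (simp add: numeral_2_eq_2)
  have "iexp u - 1 - \<i> * complex_of_real u + complex_of_real (u^2/2)
     = (iexp u - (\<Sum>k \<le> 1. (\<i> * u)^k / fact k)) + complex_of_real (u^2/2)"
    by simp
  also have "cmod \<dots> \<le> cmod (iexp u - (\<Sum>k \<le> 1. (\<i> * u)^k / fact k)) + cmod (complex_of_real (u^2/2))"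
    by (rule norm_triangle_ineq)
  also have "\<dots> \<le> u^2/2 + u^2/2"
    using taylor1 by (simp add: power2_abs norm_power)
  finally show ?thesis by simp
qed

lemma bdd_above_kappa_quotients:
  "bdd_above ((\<lambda>x. sqrt ((cos x - 1 + x^2/2)^2 + (sin x - x)^2) / x^2) ` {0<..})"
proof (rule bdd_aboveI2[where M = 1])
  fix x :: real assume "x \<in> {0<..}"
  then show "sqrt ((cos x - 1 + x^2/2)^2 + (sin x - x)^2) / x^2 \<le> 1"
    using norm_iexp_taylor2_remainder_le_sq[of x, unfolded norm_iexp_taylor2_remainder]
    by (simp add: divide_le_eq)
qed

lemma kappa_quotient_le_kappa:
  "x > 0 \<Longrightarrow> sqrt ((cos x - 1 + x^2/2)^2 + (sin x - x)^2) / x^2 \<le> kappa"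
  unfolding kappa_def by (rule cSUP_upper[OF _ bdd_above_kappa_quotients]) auto

lemma kappa_pos: "kappa > 0"
proof -
  have "pi^2/2 - 2 > (0::real)"
    using pi_gt3 mult_strict_mono[of 3 pi 3 pi] by (simp add: power2_eq_square)
  then have "sqrt ((cos pi - 1 + pi^2/2)^2 + (sin pi - pi)^2) / pi^2 > 0"
    by (simp add: add_pos_nonneg)
  then show ?thesis using kappa_quotient_le_kappa[OF pi_gt_zero] by linarith
qed

lemma norm_iexp_taylor2_remainder_le_kappa:
  "cmod (iexp u - 1 - \<i> * complex_of_real u + complex_of_real (u^2/2)) \<le> kappa * u^2"
proof (cases "u = 0")
  case False
  define v where "v = \<bar>u\<bar>"
  have "v > 0" using False by (simp add: v_def)
  have even: "(cos u - 1 + u^2/2)^2 + (sin u - u)^2 = (cos v - 1 + v^2/2)^2 + (sin v - v)^2"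
    by (cases "u \<ge> 0") (simp_all add: v_def power2_eq_square algebra_simps)
  from kappa_quotient_le_kappa[OF \<open>v > 0\<close>]
  have "sqrt ((cos v - 1 + v^2/2)^2 + (sin v - v)^2) \<le> kappa * v^2"
    using \<open>v > 0\<close> by (simp add: divide_le_eq)
  then show ?thesis unfolding norm_iexp_taylor2_remainder even by (simp add: v_def)
qed simp

section \<open>The thresholds t_gam and t1_gam\<close>

lemma gamma_star_pos: "gamma_star > 0"
  using kappa_pos by (simp add: gamma_star_def)

lemma kappa_gamma_star: "6 * kappa * gamma_star^2 = 1"
  using kappa_pos by (simp add: gamma_star_def power_divide)

lemma gamma_star_ratio_sq: "(\<gamma> / gamma_star)^2 = 6 * kappa * \<gamma>^2"
  using kappa_gamma_star gamma_star_pos by (simp add: power_divide field_simps)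

lemma t_inf_pos: "t_inf > 0"
  using gamma_star_pos by (simp add: t_inf_def)

lemma t_inf_sq: "t_inf^2 = 24 * kappa"
  using kappa_gamma_star gamma_star_pos by (simp add: t_inf_def power_divide field_simps)

lemma le_t_inf_iff: "0 \<le> s \<Longrightarrow> s \<le> t_inf \<longleftrightarrow> s^2 \<le> 24 * kappa"
  using t_inf_pos by (metis t_inf_sq abs_of_nonneg less_imp_le abs_le_square_iff)

lemma t_inf_less_vertex:
  assumes "0 < \<gamma>" "\<gamma> < gamma_star" shows "t_inf < 2/\<gamma>"
  using assms by (simp add: t_inf_def divide_strict_left_mono)

lemma t_gam_pos:
  assumes "\<gamma> > 0" shows "t_gam \<gamma> > 0"
  using assms kappa_pos by (simp add: t_gam_def gamma_star_ratio_sq)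

lemma t_gam_root:
  assumes g: "\<gamma> > 0"
  shows "(t_gam \<gamma>)^2/24 + t_gam \<gamma> / (6*\<gamma>) = kappa"
proof -
  define R where "R = sqrt (6 * kappa * \<gamma>^2 + 1)"
  have R2: "R^2 = 6 * kappa * \<gamma>^2 + 1"
    unfolding R_def using kappa_pos by simp
  have "t_gam \<gamma> = 2 / \<gamma> * (R - 1)"
    unfolding t_gam_def R_def gamma_star_ratio_sq ..
  moreover have "(2 / \<gamma> * (R - 1))^2/24 + 2 / \<gamma> * (R - 1) / (6*\<gamma>) = (R^2 - 1) / (6 * \<gamma>^2)"
    using g by (simp add: field_simps power2_eq_square)
  ultimately show ?thesis using R2 g by simp
qed

lemma t_gam_cubic_coefficient:
  assumes g: "\<gamma> > 0"
  shows "t_gam \<gamma> / 12 + 1 / (6*\<gamma>) = sqrt (6 * kappa * \<gamma>^2 + 1) / (6 * \<gamma>)"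
  using g unfolding t_gam_def gamma_star_ratio_sq by (simp add: field_simps)

lemma le_t_gam_iff:
  assumes g: "\<gamma> > 0" and s: "0 \<le> s"
  shows "s \<le> t_gam \<gamma> \<longleftrightarrow> s^2/24 + s/(6*\<gamma>) \<le> kappa"
proof
  assume "s \<le> t_gam \<gamma>"
  then have "s^2 \<le> (t_gam \<gamma>)^2" "s/(6*\<gamma>) \<le> t_gam \<gamma> / (6*\<gamma>)"
    using s g by (auto intro: power_mono divide_right_mono)
  then show "s^2/24 + s/(6*\<gamma>) \<le> kappa" using t_gam_root[OF g] by linarith
next
  assume le: "s^2/24 + s/(6*\<gamma>) \<le> kappa"
  show "s \<le> t_gam \<gamma>"
  proof (rule ccontr)
    assume "\<not> s \<le> t_gam \<gamma>"
    then have "(t_gam \<gamma>)^2 < s^2" "t_gam \<gamma> / (6*\<gamma>) < s/(6*\<gamma>)"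
      using t_gam_pos[OF g] g by (auto intro: power_strict_mono divide_strict_right_mono)
    then show False using le t_gam_root[OF g] by linarith
  qed
qed

lemma t_gam_le_t_inf:
  assumes g: "\<gamma> > 0" shows "t_gam \<gamma> \<le> t_inf"
proof -
  have "t_gam \<gamma> / (6*\<gamma>) > 0" using t_gam_pos[OF g] g by simp
  then have "(t_gam \<gamma>)^2 \<le> 24 * kappa" using t_gam_root[OF g] by linarith
  then show ?thesis using le_t_inf_iff t_gam_pos[OF g] by simp
qed

lemma t_gam_mono:
  assumes "0 < \<gamma>1" "\<gamma>1 \<le> \<gamma>2"
  shows "t_gam \<gamma>1 \<le> t_gam \<gamma>2"
proof -
  have "t_gam \<gamma>1 / (6*\<gamma>2) \<le> t_gam \<gamma>1 / (6*\<gamma>1)"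
    using assms t_gam_pos[OF assms(1)] by (intro divide_left_mono) auto
  then have "(t_gam \<gamma>1)^2/24 + t_gam \<gamma>1 / (6*\<gamma>2) \<le> kappa"
    using t_gam_root[OF assms(1)] by linarith
  then show ?thesis
    using le_t_gam_iff[of \<gamma>2 "t_gam \<gamma>1"] assms t_gam_pos[OF assms(1)] by simp
qed

lemma t1_gam_large:
  assumes "gamma_star \<le> \<gamma>" shows "t1_gam \<gamma> = t_inf"
proof -
  have "1/\<gamma> \<le> 1/gamma_star" using assms gamma_star_pos by (intro divide_left_mono) auto
  moreover have "1 \<le> (\<gamma>/gamma_star)^2"
    using assms gamma_star_pos by (simp add: one_le_power le_divide_eq)
  ultimately show ?thesis by (simp add: t1_gam_def t2_gam_def t_inf_def max_def)
qed

lemma t2_gam_small: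
  assumes "0 < \<gamma>" "\<gamma> < gamma_star" shows "t2_gam \<gamma> = 2/\<gamma>"
proof -
  have "1/gamma_star < 1/\<gamma>" using assms by (simp add: divide_strict_left_mono)
  then show ?thesis by (simp add: t2_gam_def)
qed

lemma t1_gam_small_factorization:
  assumes g: "0 < \<gamma>" "\<gamma> < gamma_star"
  obtains r where "2/\<gamma> < r"
    and "\<And>s. kappa + s^2/24 - s/(6*\<gamma>) = (s - t1_gam \<gamma>) * (s - r) / 24"
proof -
  have "(\<gamma>/gamma_star)^2 < 1" using g by (simp add: power_less_one_iff)
  then have small: "6 * kappa * \<gamma>^2 < 1" unfolding gamma_star_ratio_sq .
  define D where "D = sqrt (1 - 6 * kappa * \<gamma>^2)"
  have D: "D > 0" "D^2 = 1 - 6 * kappa * \<gamma>^2" using small by (simp_all add: D_def)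
  have t1: "t1_gam \<gamma> = 2/\<gamma> * (1 - D)"
    using small by (simp add: t1_gam_def t2_gam_small[OF g] gamma_star_ratio_sq D_def)
  show ?thesis
  proof
    show "2/\<gamma> < 2/\<gamma> * (1 + D)" using D g by (simp add: divide_strict_right_mono)
    have k: "kappa = (1 - D^2) / (6 * \<gamma>^2)" using g D(2) by (simp add: field_simps)
    show "kappa + s^2/24 - s/(6*\<gamma>) = (s - t1_gam \<gamma>) * (s - 2/\<gamma> * (1 + D)) / 24" for s
      using g unfolding t1 k by (simp add: field_simps power2_eq_square)
  qed
qed

lemma t1_gam_small_bounds:
  assumes g: "0 < \<gamma>" "\<gamma> < gamma_star"
  shows "0 < t1_gam \<gamma>" "t1_gam \<gamma> < t_inf"
proof -
  obtain r where r: "2/\<gamma> < r" and fac: "\<And>s. kappa + s^2/24 - s/(6*\<gamma>) = (s - t1_gam \<gamma>) * (s - r) / 24"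
    using t1_gam_small_factorization[OF g] by blast
  from r t_inf_less_vertex[OF g] have r_gt: "t_inf < r" by linarith
  have prod: "t1_gam \<gamma> * r = t_inf^2" using fac[of 0] by (simp add: t_inf_sq)
  then show pos: "0 < t1_gam \<gamma>"
    using r_gt t_inf_pos by (metis zero_less_mult_pos2 less_trans zero_less_power)
  have "t1_gam \<gamma> * r < t_inf * r" using prod r_gt t_inf_pos by (simp add: power2_eq_square)
  then show "t1_gam \<gamma> < t_inf" using r_gt t_inf_pos by simp
qed

lemma le_t1_gam_iff:
  assumes g: "0 < \<gamma>" "\<gamma> < gamma_star" and s: "s \<le> 2/\<gamma>"
  shows "s \<le> t1_gam \<gamma> \<longleftrightarrow> s/(6*\<gamma>) \<le> kappa + s^2/24"
proof -
  obtain r where r: "2/\<gamma> < r" and fac: "kappa + s^2/24 - s/(6*\<gamma>) = (s - t1_gam \<gamma>) * (s - r) / 24"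
    using t1_gam_small_factorization[OF g] by blast
  have "s - r < 0" using r s by simp
  then have "0 \<le> (s - t1_gam \<gamma>) * (s - r) \<longleftrightarrow> s \<le> t1_gam \<gamma>"
    by (simp add: zero_le_mult_iff)
  then show ?thesis using fac by linarith
qed

lemma t1_gam_le_t_inf:
  assumes "\<gamma> > 0" shows "t1_gam \<gamma> \<le> t_inf"
  using assms t1_gam_small_bounds t1_gam_large by (cases "\<gamma> < gamma_star") force+

lemma t_gam_le_t1_gam:
  assumes g: "\<gamma> > 0" shows "t_gam \<gamma> \<le> t1_gam \<gamma>"
proof (cases "\<gamma> < gamma_star")
  case True
  have "t_gam \<gamma> \<le> 2/\<gamma>"
    using t_gam_le_t_inf[OF g] t_inf_less_vertex[OF g True] by simp
  moreover have "t_gam \<gamma> / (6*\<gamma>) \<le> kappa + (t_gam \<gamma>)^2/24"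
    using t_gam_root[OF g] zero_le_power2[of "t_gam \<gamma>"] by linarith
  ultimately show ?thesis using le_t1_gam_iff[OF g True] by simp
next
  case False
  then show ?thesis using t_gam_le_t_inf[OF g] t1_gam_large by simp
qed

lemma t1_gam_mono:
  assumes g: "0 < \<gamma>1" "\<gamma>1 \<le> \<gamma>2"
  shows "t1_gam \<gamma>1 \<le> t1_gam \<gamma>2"
proof (cases "\<gamma>2 < gamma_star")
  case True
  have g1: "\<gamma>1 < gamma_star" using g True by simp
  define s where "s = t1_gam \<gamma>1"
  have s0: "0 < s" using t1_gam_small_bounds[OF g(1) g1] by (simp add: s_def)
  have "s \<le> 2/\<gamma>1"
    using t1_gam_small_bounds[OF g(1) g1] t_inf_less_vertex[OF g(1) g1] by (simp add: s_def)
  then have "s/(6*\<gamma>1) \<le> kappa + s^2/24" using le_t1_gam_iff[OF g(1) g1, of s] by (simp add: s_def)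
  moreover have "s/(6*\<gamma>2) \<le> s/(6*\<gamma>1)" using g s0 by (intro divide_left_mono) auto
  moreover have "s \<le> 2/\<gamma>2"
    using t1_gam_small_bounds[OF g(1) g1] t_inf_less_vertex[OF _ True] g by (simp add: s_def)
  ultimately show ?thesis
    using le_t1_gam_iff[OF _ True, of s] g by (simp add: s_def)
next
  case False
  then show ?thesis using t1_gam_le_t_inf[OF g(1)] t1_gam_large by simp
qed

section \<open>Closed forms of p_R and p_E\<close>

definition pR_profile :: "real \<Rightarrow> real \<Rightarrow> real" where
  "pR_profile \<gamma> s = max (s/(6*\<gamma>)) (max (kappa + s^2/24) (s^2/12))"

lemma pR_eq_pR_profile:
  assumes e: "\<epsilon> > 0" shows "pR t \<epsilon> \<gamma> = t^2/\<epsilon> * pR_profile \<gamma> (\<epsilon>*\<bar>t\<bar>)"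
proof -
  have lin: "\<epsilon> * (\<bar>t\<bar> / (6 * \<gamma>)) = \<epsilon>*\<bar>t\<bar> / (6 * \<gamma>)" by simp
  have quad: "\<epsilon> * (kappa / \<epsilon> + \<epsilon> * t^2 / 24) = kappa + (\<epsilon>*\<bar>t\<bar>)^2/24"
    using e by (simp add: field_simps power2_eq_square)
  have sq: "\<epsilon> * (\<epsilon> * t^2 / 12) = (\<epsilon>*\<bar>t\<bar>)^2/12"
    by (simp add: power2_eq_square)
  have "\<epsilon> * max (\<bar>t\<bar> / (6 * \<gamma>)) (max (kappa / \<epsilon> + \<epsilon> * t^2 / 24) (\<epsilon> * t^2 / 12))
      = pR_profile \<gamma> (\<epsilon>*\<bar>t\<bar>)"
    using e unfolding pR_profile_def max_mult_distrib_left lin quad sq by simp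
  then show ?thesis using e unfolding pR_def by (simp add: field_simps)
qed

lemma pR_profile_large_gamma:
  assumes g: "gamma_star \<le> \<gamma>" and s: "0 \<le> s"
  shows "pR_profile \<gamma> s = (if s \<le> t_inf then kappa + s^2/24 else s^2/12)"
proof -
  have "s/(6*\<gamma>) \<le> s/(6*gamma_star)"
    using g s gamma_star_pos by (intro divide_left_mono) auto
  also have "\<dots> \<le> kappa + s^2/24"
  proof -
    have "kappa + s^2/24 - s/(6*gamma_star) = (s - t_inf)^2/24"
      using kappa_gamma_star gamma_star_pos
      by (simp add: t_inf_def field_simps power2_eq_square)
    then show ?thesis using zero_le_power2[of "s - t_inf"] by linarith
  qed
  finally have "s/(6*\<gamma>) \<le> kappa + s^2/24" .
  moreover have "s^2/12 \<le> kappa + s^2/24 \<longleftrightarrow> s \<le> t_inf"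
    using le_t_inf_iff[OF s] by argo
  ultimately show ?thesis unfolding pR_profile_def by auto
qed

lemma pR_profile_small_gamma:
  assumes g: "0 < \<gamma>" "\<gamma> < gamma_star" and s: "0 \<le> s"
  shows "pR_profile \<gamma> s = (if s \<le> t1_gam \<gamma> then kappa + s^2/24
                            else if s \<le> 2/\<gamma> then s/(6*\<gamma>) else s^2/12)"
proof -
  have "s/(6*\<gamma>) - s^2/12 = s * (2/\<gamma> - s) / 12"
    using g by (simp add: field_simps power2_eq_square)
  then have "s^2/12 \<le> s/(6*\<gamma>) \<longleftrightarrow> 0 \<le> s * (2/\<gamma> - s)" by argo
  then have s2_vs_lin: "s^2/12 \<le> s/(6*\<gamma>) \<longleftrightarrow> s \<le> 2/\<gamma>"
    using g s by (cases "s = 0") (auto simp: zero_le_mult_iff)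
  have s2_vs_quad: "s^2/12 \<le> kappa + s^2/24 \<longleftrightarrow> s \<le> t_inf"
    using le_t_inf_iff[OF s] by argo
  note t1 = t1_gam_small_bounds[OF g] and vertex = t_inf_less_vertex[OF g]
  consider "s \<le> t1_gam \<gamma>" | "t1_gam \<gamma> < s" "s \<le> 2/\<gamma>" | "2/\<gamma> < s" by linarith
  then show ?thesis
  proof cases
    case 1
    then have "s/(6*\<gamma>) \<le> kappa + s^2/24" "s^2/12 \<le> kappa + s^2/24"
      using le_t1_gam_iff[OF g, of s] t1 vertex s2_vs_quad by auto
    then show ?thesis using 1 by (simp add: pR_profile_def)
  next
    case 2
    then have "kappa + s^2/24 \<le> s/(6*\<gamma>)" "s^2/12 \<le> s/(6*\<gamma>)"
      using le_t1_gam_iff[OF g, of s] s2_vs_lin by auto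
    then show ?thesis using 2 by (simp add: pR_profile_def)
  next
    case 3
    then have "s/(6*\<gamma>) \<le> s^2/12" "kappa + s^2/24 \<le> s^2/12"
      using s2_vs_lin s2_vs_quad vertex by auto
    then show ?thesis using 3 t1 vertex by (simp add: pR_profile_def)
  qed
qed

lemma pR_branches:
  assumes e: "\<epsilon> > 0"
  shows "t^2/\<epsilon> * (kappa + (\<epsilon>*\<bar>t\<bar>)^2/24) = kappa * t^2 / \<epsilon> + \<epsilon> * t^4 / 24"
    and "t^2/\<epsilon> * ((\<epsilon>*\<bar>t\<bar>)/(6*\<gamma>)) = \<bar>t\<bar>^3 / (6 * \<gamma>)"
    and "t^2/\<epsilon> * ((\<epsilon>*\<bar>t\<bar>)^2/12) = \<epsilon> * t^4 / 12"
proof -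
  have tt: "\<bar>t\<bar>^2 = t^2" by simp
  show "t^2/\<epsilon> * (kappa + (\<epsilon>*\<bar>t\<bar>)^2/24) = kappa * t^2 / \<epsilon> + \<epsilon> * t^4 / 24"
    using e by (simp add: field_simps power_mult_distrib power2_eq_square power4_eq_xxxx)
  show "t^2/\<epsilon> * ((\<epsilon>*\<bar>t\<bar>)/(6*\<gamma>)) = \<bar>t\<bar>^3 / (6 * \<gamma>)"
    using e by (simp add: field_simps power2_eq_square power3_eq_cube flip: tt)
  show "t^2/\<epsilon> * ((\<epsilon>*\<bar>t\<bar>)^2/12) = \<epsilon> * t^4 / 12"
    using e by (simp add: field_simps power_mult_distrib power2_eq_square power4_eq_xxxx)
qed

lemma pR_large_gamma:
  assumes "\<epsilon> > 0" "gamma_star \<le> \<gamma>"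
  shows "pR t \<epsilon> \<gamma> = (if \<epsilon> * \<bar>t\<bar> \<le> t_inf then kappa * t^2 / \<epsilon> + \<epsilon> * t^4 / 24
                      else \<epsilon> * t^4 / 12)"
proof -
  have s: "0 \<le> \<epsilon> * \<bar>t\<bar>" using assms by simp
  show ?thesis
    unfolding pR_eq_pR_profile[OF assms(1)] pR_profile_large_gamma[OF assms(2) s]
    by (cases "\<epsilon> * \<bar>t\<bar> \<le> t_inf") (simp_all only: if_True if_False pR_branches[OF assms(1)])
qed

lemma pR_small_gamma:
  assumes "\<epsilon> > 0" "0 < \<gamma>" "\<gamma> < gamma_star"
  shows "pR t \<epsilon> \<gamma> = (if \<epsilon> * \<bar>t\<bar> \<le> t1_gam \<gamma> then kappa * t^2 / \<epsilon> + \<epsilon> * t^4 / 24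
                      else if \<epsilon> * \<bar>t\<bar> \<le> t2_gam \<gamma> then \<bar>t\<bar>^3 / (6 * \<gamma>)
                      else \<epsilon> * t^4 / 12)"
proof -
  have s: "0 \<le> \<epsilon> * \<bar>t\<bar>" using assms by simp
  show ?thesis
    unfolding pR_eq_pR_profile[OF assms(1)] pR_profile_small_gamma[OF assms(2,3) s]
      t2_gam_small[OF assms(2,3)]
    by (cases "\<epsilon> * \<bar>t\<bar> \<le> t1_gam \<gamma>"; cases "\<epsilon> * \<bar>t\<bar> \<le> 2/\<gamma>")
      (simp_all only: if_True if_False pR_branches[OF assms(1)])
qed

lemma pR_const_large_gamma:
  assumes "\<epsilon> > 0" "gamma_star \<le> \<gamma>1" "gamma_star \<le> \<gamma>2"
  shows "pR t \<epsilon> \<gamma>1 = pR t \<epsilon> \<gamma>2"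
  using assms pR_large_gamma by simp

lemma pR_eq_pR_min_gamma_star:
  assumes "\<epsilon> > 0" "\<gamma> > 0"
  shows "pR t \<epsilon> \<gamma> = pR t \<epsilon> (min \<gamma> gamma_star)"
  using assms pR_const_large_gamma[OF assms(1), of \<gamma> gamma_star]
  by (cases "\<gamma> \<le> gamma_star") (auto simp: min_def)

lemma pR_antimono_gamma:
  assumes "0 < \<gamma>1" "\<gamma>1 \<le> \<gamma>2" shows "pR t \<epsilon> \<gamma>2 \<le> pR t \<epsilon> \<gamma>1"
  unfolding pR_def using assms
  by (intro mult_left_mono max.mono order.refl divide_left_mono) auto

lemma reciprocal_plus_linear_antimono:
  fixes a b z w :: real
  assumes "0 < z" "z \<le> w" "0 \<le> b" "b * w^2 \<le> a"
  shows "a / w + b * w \<le> a / z + b * z"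
proof -
  have "b * (z * w) \<le> b * w^2"
    using assms by (intro mult_left_mono) (auto simp: power2_eq_square)
  then have "0 \<le> (w - z) * (a - b * (z * w)) / (z * w)"
    using assms by (intro divide_nonneg_pos mult_nonneg_nonneg) auto
  also have "\<dots> = a / z + b * z - (a / w + b * w)"
    using assms by (simp add: field_simps)
  finally show ?thesis by simp
qed

lemma pE_aux_ge:
  shows "z * t^2/12 + \<bar>t\<bar> / (6*\<gamma>) \<le> pE_aux t \<gamma> z"
    and "kappa / z + z * t^2/24 \<le> pE_aux t \<gamma> z"
  unfolding pE_aux_def by auto

lemma pE_le_pE_aux:
  assumes "\<gamma> > 0" "z \<in> {0<..\<epsilon>}"
  shows "pE t \<epsilon> \<gamma> \<le> t^2 * pE_aux t \<gamma> z"
proof -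
  have "0 \<le> pE_aux t \<gamma> u" if "u > 0" for u
  proof -
    have "0 \<le> u * t^2/12 + \<bar>t\<bar> / (6*\<gamma>)" using assms(1) that by simp
    then show ?thesis using pE_aux_ge(1)[of u t \<gamma>] by linarith
  qed
  then have "(INF u\<in>{0<..\<epsilon>}. pE_aux t \<gamma> u) \<le> pE_aux t \<gamma> z"
    using assms(2) by (intro cINF_lower bdd_belowI2) auto
  then show ?thesis unfolding pE_def by (simp add: mult_left_mono)
qed

lemma pE_eq_pE_aux_if_minimal:
  assumes "\<gamma> > 0" "z0 \<in> {0<..\<epsilon>}"
    and "\<And>z. z \<in> {0<..\<epsilon>} \<Longrightarrow> pE_aux t \<gamma> z0 \<le> pE_aux t \<gamma> z"
  shows "pE t \<epsilon> \<gamma> = t^2 * pE_aux t \<gamma> z0"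
proof -
  have "pE_aux t \<gamma> z0 \<le> (INF z\<in>{0<..\<epsilon>}. pE_aux t \<gamma> z)"
    using assms(2,3) by (intro cINF_greatest) auto
  then have "t^2 * pE_aux t \<gamma> z0 \<le> pE t \<epsilon> \<gamma>" unfolding pE_def by (simp add: mult_left_mono)
  with pE_le_pE_aux[OF assms(1,2), of t] show ?thesis by simp
qed

text \<open>If \<open>\<epsilon>\<bar>t\<bar> \<le> t_gam \<gamma>\<close>, the second argument of the maximum in \<open>pE_aux\<close> wins on all
  of \<open>(0, \<epsilon>]\<close> and the minimum is attained at the endpoint \<open>\<epsilon>\<close>.\<close>
lemma pE_below_t_gam:
  assumes g: "\<gamma> > 0" and e: "\<epsilon> > 0" and small: "\<epsilon> * \<bar>t\<bar> \<le> t_gam \<gamma>"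
  shows "pE t \<epsilon> \<gamma> = t^2 * pE_aux t \<gamma> \<epsilon>"
    and "pE t \<epsilon> \<gamma> = kappa * t^2 / \<epsilon> + \<epsilon> * t^4 / 24"
proof -
  have q: "(\<epsilon>*\<bar>t\<bar>)^2/24 + (\<epsilon>*\<bar>t\<bar>)/(6*\<gamma>) \<le> kappa"
    using le_t_gam_iff[OF g, of "\<epsilon>*\<bar>t\<bar>"] small e by simp
  have "\<bar>t\<bar>/(6*\<gamma>) \<le> kappa/\<epsilon> - \<epsilon>*t^2/24"
  proof -
    have "kappa/\<epsilon> - \<epsilon>*t^2/24 - \<bar>t\<bar>/(6*\<gamma>) = (kappa - ((\<epsilon>*\<bar>t\<bar>)^2/24 + (\<epsilon>*\<bar>t\<bar>)/(6*\<gamma>))) / \<epsilon>"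
      using e g by (simp add: field_simps power2_eq_square)
    moreover have "0 \<le> (kappa - ((\<epsilon>*\<bar>t\<bar>)^2/24 + (\<epsilon>*\<bar>t\<bar>)/(6*\<gamma>))) / \<epsilon>"
      using q e by simp
    ultimately show ?thesis by linarith
  qed
  then have at_eps: "pE_aux t \<gamma> \<epsilon> = kappa/\<epsilon> + \<epsilon>*t^2/24"
    unfolding pE_aux_def by simp
  have "\<epsilon>^2 * t^2 \<le> 24 * kappa"
    using t_gam_le_t_inf[OF g] small le_t_inf_iff[of "\<epsilon>*\<bar>t\<bar>"] e
    by (simp add: power_mult_distrib)
  then have "pE_aux t \<gamma> \<epsilon> \<le> pE_aux t \<gamma> z" if "z \<in> {0<..\<epsilon>}" for z
    using reciprocal_plus_linear_antimono[of z \<epsilon> "t^2/24" kappa] pE_aux_ge(2)[of z t \<gamma>] that at_eps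
    by (simp add: mult.commute)
  then show eq: "pE t \<epsilon> \<gamma> = t^2 * pE_aux t \<gamma> \<epsilon>"
    using pE_eq_pE_aux_if_minimal[OF g] e by simp
  show "pE t \<epsilon> \<gamma> = kappa * t^2 / \<epsilon> + \<epsilon> * t^4 / 24"
    unfolding eq at_eps using e by (simp add: field_simps power2_eq_square power4_eq_xxxx)
qed

text \<open>If \<open>\<epsilon>\<bar>t\<bar> > t_gam \<gamma>\<close>, the minimum is attained where the two arguments of the
  maximum in \<open>pE_aux\<close> coincide, namely at \<open>z = t_gam \<gamma> / \<bar>t\<bar>\<close>.\<close>
lemma pE_above_t_gam:
  assumes g: "\<gamma> > 0" and e: "\<epsilon> > 0" and large: "t_gam \<gamma> < \<epsilon> * \<bar>t\<bar>"
  shows "t_gam \<gamma> / \<bar>t\<bar> \<in> {0<..\<epsilon>}"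
    and "pE t \<epsilon> \<gamma> = t^2 * pE_aux t \<gamma> (t_gam \<gamma> / \<bar>t\<bar>)"
    and "pE t \<epsilon> \<gamma> = sqrt (6 * kappa * \<gamma>^2 + 1) / (6 * \<gamma>) * \<bar>t\<bar>^3"
proof -
  define a where "a = \<bar>t\<bar>"
  define T where "T = t_gam \<gamma>"
  define z1 where "z1 = T / a"
  have a: "a > 0" using large t_gam_pos[OF g] e by (auto simp: a_def zero_less_mult_iff)
  have t2: "t^2 = a^2" and tt: "t * t = a * a" by (simp_all add: a_def)
  have T: "T > 0" "T^2/24 + T/(6*\<gamma>) = kappa"
    using t_gam_pos[OF g] t_gam_root[OF g] by (simp_all add: T_def)
  show z1: "t_gam \<gamma> / \<bar>t\<bar> \<in> {0<..\<epsilon>}"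
    using large T a by (simp add: T_def a_def field_simps)
  have balance: "kappa / z1 - z1 * t^2 / 24 = a/(6*\<gamma>)"
  proof -
    have "kappa / z1 - z1 * t^2 / 24 = a * (kappa - T^2/24) / T"
      using T a by (simp add: z1_def tt field_simps power2_eq_square)
    also have "kappa - T^2/24 = T/(6*\<gamma>)" using T(2) by linarith
    also have "a * (T/(6*\<gamma>)) / T = a/(6*\<gamma>)" using T g by simp
    finally show ?thesis .
  qed
  then have at_z1: "pE_aux t \<gamma> z1 = z1*t^2/12 + a/(6*\<gamma>)"
    unfolding pE_aux_def by (simp add: a_def)
  have "T^2 \<le> 24 * kappa"
    using le_t_inf_iff[of T] t_gam_le_t_inf[OF g] T by (simp add: T_def)
  then have z1_sq: "t^2/24 * z1^2 \<le> kappa"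
    using a by (simp add: z1_def t2 power_divide)
  have "pE_aux t \<gamma> z1 \<le> pE_aux t \<gamma> z" if z: "z \<in> {0<..\<epsilon>}" for z
  proof (cases "z1 \<le> z")
    case True
    then have "z1 * t^2/12 \<le> z * t^2/12" by (simp add: mult_right_mono)
    then show ?thesis using at_z1 pE_aux_ge(1)[of z t \<gamma>] by (simp add: a_def)
  next
    case False
    then show ?thesis
      using reciprocal_plus_linear_antimono[of z z1 "t^2/24" kappa] pE_aux_ge(2)[of z t \<gamma>]
        z z1_sq balance at_z1 by (simp add: mult.commute)
  qed
  then show eq: "pE t \<epsilon> \<gamma> = t^2 * pE_aux t \<gamma> (t_gam \<gamma> / \<bar>t\<bar>)"
    using pE_eq_pE_aux_if_minimal[OF g z1] by (simp add: z1_def T_def a_def)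
  have "t^2 * pE_aux t \<gamma> z1 = a^3 * (T/12 + 1/(6*\<gamma>))"
    unfolding at_z1 t2 using a by (simp add: z1_def field_simps power2_eq_square power3_eq_cube)
  then show "pE t \<epsilon> \<gamma> = sqrt (6 * kappa * \<gamma>^2 + 1) / (6 * \<gamma>) * \<bar>t\<bar>^3"
    using eq t_gam_cubic_coefficient[OF g] by (simp add: z1_def T_def a_def)
qed

lemma pE_attained:
  assumes "\<gamma> > 0" "\<epsilon> > 0"
  obtains z where "z \<in> {0<..\<epsilon>}" "pE t \<epsilon> \<gamma> = t^2 * pE_aux t \<gamma> z"
  using assms pE_below_t_gam(1) pE_above_t_gam(1,2) by (metis greaterThanAtMost_iff not_le order_refl)

lemma pE_closed_form:
  assumes "\<gamma> > 0" "\<epsilon> > 0"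
  shows "pE t \<epsilon> \<gamma> = (if \<epsilon> * \<bar>t\<bar> \<le> t_gam \<gamma> then kappa * t^2 / \<epsilon> + \<epsilon> * t^4 / 24
                      else sqrt (6 * kappa * \<gamma>^2 + 1) / (6 * \<gamma>) * \<bar>t\<bar>^3)"
  using assms pE_below_t_gam(2) pE_above_t_gam(3) by simp

lemma pE_antimono_gamma:
  assumes "\<epsilon> > 0" "0 < \<gamma>1" "\<gamma>1 \<le> \<gamma>2"
  shows "pE t \<epsilon> \<gamma>2 \<le> pE t \<epsilon> \<gamma>1"
proof -
  obtain z where z: "z \<in> {0<..\<epsilon>}" and pz: "pE t \<epsilon> \<gamma>1 = t^2 * pE_aux t \<gamma>1 z"
    using pE_attained[OF assms(2,1)] .
  have "\<bar>t\<bar>/(6*\<gamma>2) \<le> \<bar>t\<bar>/(6*\<gamma>1)" using assms by (intro divide_left_mono) auto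
  then have "t^2 * pE_aux t \<gamma>2 z \<le> t^2 * pE_aux t \<gamma>1 z"
    unfolding pE_aux_def by (intro mult_left_mono) auto
  then show ?thesis using pE_le_pE_aux[OF _ z, of \<gamma>2 t] assms pz by simp
qed

lemma pE_antimono_eps:
  assumes "\<gamma> > 0" "0 < \<epsilon>1" "\<epsilon>1 \<le> \<epsilon>2"
  shows "pE t \<epsilon>2 \<gamma> \<le> pE t \<epsilon>1 \<gamma>"
proof -
  obtain z where z: "z \<in> {0<..\<epsilon>1}" and pz: "pE t \<epsilon>1 \<gamma> = t^2 * pE_aux t \<gamma> z"
    using pE_attained[OF assms(1,2)] .
  then show ?thesis using pE_le_pE_aux[OF assms(1), of z \<epsilon>2 t] assms(3) by simp
qed

section \<open>Truncated moments and the characteristic function\<close>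

lemma integrable_power_indicator_abs_less:
  fixes Y :: "'a \<Rightarrow> real"
  assumes [measurable]: "Y \<in> borel_measurable M" and Y2: "integrable M (\<lambda>\<omega>. (Y \<omega>)^2)"
    and n: "2 \<le> n"
  shows "integrable M (\<lambda>\<omega>. (Y \<omega>)^n * indicator {x. \<bar>x\<bar> < z} (Y \<omega>))"
proof (rule Bochner_Integration.integrable_bound)
  show "integrable M (\<lambda>\<omega>. \<bar>z\<bar>^(n-2) * (Y \<omega>)^2)" using Y2 by simp
  have split: "\<bar>Y \<omega>\<bar>^n = \<bar>Y \<omega>\<bar>^(n-2) * (Y \<omega>)^2" for \<omega>
    using n power_add[of "\<bar>Y \<omega>\<bar>" "n-2" 2] by (simp only: le_add_diff_inverse2 power2_abs)
  have "\<bar>Y \<omega>\<bar>^(n-2) * (Y \<omega>)^2 \<le> \<bar>z\<bar>^(n-2) * (Y \<omega>)^2" if "\<bar>Y \<omega>\<bar> < z" for \<omega>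
    using that by (intro mult_right_mono power_mono) auto
  then show "AE \<omega> in M. norm ((Y \<omega>)^n * indicator {x. \<bar>x\<bar> < z} (Y \<omega>)) \<le> norm (\<bar>z\<bar>^(n-2) * (Y \<omega>)^2)"
    by (intro AE_I2) (auto simp: indicator_def abs_mult power_abs split)
qed simp

lemma integrable_sq_indicator:
  fixes Y :: "'a \<Rightarrow> real"
  assumes [measurable]: "Y \<in> borel_measurable M" "A \<in> sets borel"
    and Y2: "integrable M (\<lambda>\<omega>. (Y \<omega>)^2)"
  shows "integrable M (\<lambda>\<omega>. (Y \<omega>)^2 * indicator A (Y \<omega>))"
  by (rule Bochner_Integration.integrable_bound[OF Y2]) (auto simp: indicator_def)

lemma char_second_order_estimate:
  fixes Y :: "'a \<Rightarrow> real"
  assumes P: "prob_space M" and [measurable]: "Y \<in> borel_measurable M"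
    and Y1: "integrable M Y" and Y0: "(\<integral>\<omega>. Y \<omega> \<partial>M) = 0"
    and Y2: "integrable M (\<lambda>\<omega>. (Y \<omega>)^2)"
  shows "cmod (char (distr M borel Y) t - 1 + complex_of_real ((\<integral>\<omega>. (Y \<omega>)^2 \<partial>M) * t^2 / 2)
            + \<i> * complex_of_real (t^3/6 * (\<integral>\<omega>. (Y \<omega>)^3 * indicator {x. \<bar>x\<bar> < z} (Y \<omega>) \<partial>M)))
         \<le> t^4/24 * (\<integral>\<omega>. (Y \<omega>)^4 * indicator {x. \<bar>x\<bar> < z} (Y \<omega>) \<partial>M)
            + kappa * t^2 * (\<integral>\<omega>. (Y \<omega>)^2 * indicator {x. \<bar>x\<bar> \<ge> z} (Y \<omega>) \<partial>M)"
proof -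
  interpret prob_space M by (rule P)
  define Y3 where "Y3 \<omega> = (Y \<omega>)^3 * indicator {x. \<bar>x\<bar> < z} (Y \<omega>)" for \<omega>
  define Y4 where "Y4 \<omega> = (Y \<omega>)^4 * indicator {x. \<bar>x\<bar> < z} (Y \<omega>)" for \<omega>
  define Z2 where "Z2 \<omega> = (Y \<omega>)^2 * indicator {x. \<bar>x\<bar> \<ge> z} (Y \<omega>)" for \<omega>
  have iY3: "integrable M Y3"
    unfolding Y3_def using integrable_power_indicator_abs_less[OF _ Y2, of 3] by simp
  have iY4: "integrable M Y4"
    unfolding Y4_def using integrable_power_indicator_abs_less[OF _ Y2, of 4] by simp
  have iZ2: "integrable M Z2" unfolding Z2_def by (rule integrable_sq_indicator[OF _ _ Y2]) auto
  define G where "G \<omega> = iexp (t * Y \<omega>) - 1 - \<i> * complex_of_real (t * Y \<omega>)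
     + complex_of_real (t^2/2 * (Y \<omega>)^2) + \<i> * complex_of_real (t^3/6 * Y3 \<omega>)" for \<omega>
  have iexp: "integrable M (\<lambda>\<omega>. iexp (t * Y \<omega>))"
    by (rule integrable_const_bound[of _ 1]) (auto simp: norm_exp_i_times)
  have i1: "integrable M (\<lambda>\<omega>. iexp (t * Y \<omega>) - 1)" using iexp by simp
  have i2: "integrable M (\<lambda>\<omega>. \<i> * complex_of_real (t * Y \<omega>))" using Y1 by simp
  have i3: "integrable M (\<lambda>\<omega>. complex_of_real (t^2/2 * (Y \<omega>)^2))"
    using Y2 by (intro integrable_of_real integrable_mult_right)
  have i4: "integrable M (\<lambda>\<omega>. \<i> * complex_of_real (t^3/6 * Y3 \<omega>))" using iY3 by simp
  have "(\<integral>\<omega>. G \<omega> \<partial>M) = (\<integral>\<omega>. iexp (t * Y \<omega>) - 1 \<partial>M) - (\<integral>\<omega>. \<i> * complex_of_real (t * Y \<omega>) \<partial>M)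
      + (\<integral>\<omega>. complex_of_real (t^2/2 * (Y \<omega>)^2) \<partial>M) + (\<integral>\<omega>. \<i> * complex_of_real (t^3/6 * Y3 \<omega>) \<partial>M)"
    unfolding G_def using i1 i2 i3 i4
    by (simp only: Bochner_Integration.integral_add Bochner_Integration.integral_diff
        Bochner_Integration.integrable_add Bochner_Integration.integrable_diff)
  also have "(\<integral>\<omega>. iexp (t * Y \<omega>) - 1 \<partial>M) = char (distr M borel Y) t - 1"
    using iexp unfolding char_def by (simp add: integral_distr prob_space)
  finally have intG: "(\<integral>\<omega>. G \<omega> \<partial>M) = char (distr M borel Y) t - 1
      + complex_of_real ((\<integral>\<omega>. (Y \<omega>)^2 \<partial>M) * t^2 / 2) + \<i> * complex_of_real (t^3/6 * (\<integral>\<omega>. Y3 \<omega> \<partial>M))"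
    using Y0 by (simp only: integral_mult_right_zero integral_complex_of_real) (simp add: mult.commute)
  have bound: "cmod (G \<omega>) \<le> t^4/24 * Y4 \<omega> + kappa * t^2 * Z2 \<omega>" for \<omega>
  proof (cases "\<bar>Y \<omega>\<bar> < z")
    case True
    have "(\<Sum>k \<le> 3. (\<i> * complex_of_real (t * Y \<omega>))^k / fact k)
        = 1 + \<i> * complex_of_real (t * Y \<omega>) - complex_of_real (t^2/2 * (Y \<omega>)^2)
          - \<i> * complex_of_real (t^3/6 * (Y \<omega>)^3)"
      by (simp add: eval_nat_numeral fact_numeral power_mult_distrib field_simps)
    then have "G \<omega> = iexp (t * Y \<omega>) - (\<Sum>k \<le> 3. (\<i> * complex_of_real (t * Y \<omega>))^k / fact k)"
      using True by (simp add: G_def Y3_def)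
    then have "cmod (G \<omega>) \<le> \<bar>t * Y \<omega>\<bar>^4 / 24"
      using iexp_approx1[of "t * Y \<omega>" 3] by (simp add: eval_nat_numeral fact_numeral)
    then show ?thesis using True
      by (simp add: Y4_def Z2_def power_mult_distrib power_abs)
  next
    case False
    have "G \<omega> = iexp (t * Y \<omega>) - 1 - \<i> * complex_of_real (t * Y \<omega>) + complex_of_real ((t * Y \<omega>)^2/2)"
      using False by (simp add: G_def Y3_def power_mult_distrib)
    then have "cmod (G \<omega>) \<le> kappa * (t * Y \<omega>)^2"
      by (simp only: norm_iexp_taylor2_remainder_le_kappa)
    then show ?thesis using False by (simp add: Y4_def Z2_def power_mult_distrib mult_ac)
  qed
  have "integrable M G"
    unfolding G_def using iexp i2 i3 i4
    by (intro Bochner_Integration.integrable_add Bochner_Integration.integrable_diff) auto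
  have "cmod (\<integral>\<omega>. G \<omega> \<partial>M) \<le> (\<integral>\<omega>. cmod (G \<omega>) \<partial>M)"
    by (rule integral_norm_bound)
  also have "\<dots> \<le> (\<integral>\<omega>. t^4/24 * Y4 \<omega> + kappa * t^2 * Z2 \<omega> \<partial>M)"
    using \<open>integrable M G\<close> iY4 iZ2 bound by (intro integral_mono) auto
  also have "\<dots> = t^4/24 * (\<integral>\<omega>. Y4 \<omega> \<partial>M) + kappa * t^2 * (\<integral>\<omega>. Z2 \<omega> \<partial>M)"
    using iY4 iZ2 by simp
  finally show ?thesis unfolding intG Y3_def Y4_def Z2_def by (simp add: mult_ac)
qed

section \<open>The layer-cake identity\<close>

lemma nn_integral_two_u_interval:
  assumes "0 \<le> m"
  shows "(\<integral>\<^sup>+u. ennreal (2*u * indicator {0..m} u) \<partial>lborel) = ennreal (m^2)"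
proof -
  have "((\<lambda>u. 2*u) has_integral (m^2 - 0^2)) {0..m}"
    using assms by (intro fundamental_theorem_of_calculus)
      (auto intro!: derivative_eq_intros simp: has_real_derivative_iff_has_vector_derivative[symmetric])
  then have "((\<lambda>u. if u \<in> {0..m} then 2*u else 0) has_integral m^2) UNIV"
    by (simp only: has_integral_restrict_UNIV power_zero_numeral diff_zero)
  moreover have "(\<lambda>u. if u \<in> {0..m} then 2*u else 0) = (\<lambda>u. 2*u * indicator {0..m} u :: real)"
    by (auto simp: indicator_def)
  ultimately have "((\<lambda>u. 2*u * indicator {0..m} u) has_integral m^2) UNIV" by simp
  then have "integral\<^sup>N lborel (\<lambda>u. 2*u * indicator {0..m} u) = m^2"
    by (rule nn_integral_has_integral_lborel[rotated 2]) (auto simp: indicator_def)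
  then show ?thesis by simp
qed

lemma sq_min_sq_eq_nn_integral:
  fixes y z :: real
  assumes "0 \<le> z"
  shows "ennreal (y^2 * min (y^2) (z^2))
    = (\<integral>\<^sup>+u. ennreal (2*u * indicator {0..z} u * (y^2 * indicator {x. \<bar>x\<bar> \<ge> u} y)) \<partial>lborel)"
proof -
  define m where "m = min z \<bar>y\<bar>"
  have "m \<ge> 0" using assms by (simp add: m_def)
  have pt: "ennreal (2*u * indicator {0..z} u * (y^2 * indicator {x. \<bar>x\<bar> \<ge> u} y))
      = ennreal (y^2) * ennreal (2*u * indicator {0..m} u)" for u
    by (auto simp: indicator_def m_def ennreal_mult[symmetric] mult_ac)
  have "m^2 = min (y^2) (z^2)"
  proof (cases "z \<le> \<bar>y\<bar>")
    case True
    then have "z^2 \<le> \<bar>y\<bar>^2" using assms by (intro power_mono)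
    then show ?thesis using True by (simp add: m_def)
  next
    case False
    then have "\<bar>y\<bar>^2 \<le> z^2" by (intro power_mono) auto
    then show ?thesis using False by (simp add: m_def)
  qed
  then show ?thesis
    unfolding pt by (simp add: nn_integral_cmult nn_integral_two_u_interval[OF \<open>m \<ge> 0\<close>] ennreal_mult)
qed

lemma layer_cake_sq_min_sq:
  fixes Y :: "'a \<Rightarrow> real"
  assumes M: "sigma_finite_measure M" and [measurable]: "Y \<in> borel_measurable M"
    and Y2: "integrable M (\<lambda>\<omega>. (Y \<omega>)^2)" and z: "0 \<le> z"
  defines "g \<equiv> \<lambda>u. ennreal (2*u * indicator {0..z} u * (\<integral>\<omega>. (Y \<omega>)^2 * indicator {x. \<bar>x\<bar> \<ge> u} (Y \<omega>) \<partial>M))"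
  shows "g \<in> borel_measurable lborel"
    and "ennreal (\<integral>\<omega>. (Y \<omega>)^2 * min ((Y \<omega>)^2) (z^2) \<partial>M) = integral\<^sup>N lborel g"
proof -
  interpret sigma_finite_measure M by (rule M)
  interpret pair_sigma_finite M lborel
    unfolding pair_sigma_finite_def using M lborel.sigma_finite_measure_axioms by simp
  define F where "F \<omega> u = 2*u * indicator {0..z} u * ((Y \<omega>)^2 * indicator {x. \<bar>x\<bar> \<ge> u} (Y \<omega>))" for \<omega> u
  have g_eq: "g = (\<lambda>u. \<integral>\<^sup>+\<omega>. ennreal (F \<omega> u) \<partial>M)"
  proof
    fix u :: real
    have "integrable M (\<lambda>\<omega>. (Y \<omega>)^2 * indicator {x. \<bar>x\<bar> \<ge> u} (Y \<omega>))"
      by (rule integrable_sq_indicator[OF _ _ Y2]) auto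
    then have "(\<integral>\<^sup>+\<omega>. ennreal (F \<omega> u) \<partial>M) = ennreal (\<integral>\<omega>. F \<omega> u \<partial>M)"
      unfolding F_def by (intro nn_integral_eq_integral) (auto simp: indicator_def)
    then show "g u = (\<integral>\<^sup>+\<omega>. ennreal (F \<omega> u) \<partial>M)"
      unfolding g_def F_def by simp
  qed
  show "g \<in> borel_measurable lborel"
    unfolding g_eq F_def by measurable
  have "integrable M (\<lambda>\<omega>. (Y \<omega>)^2 * min ((Y \<omega>)^2) (z^2))"
  proof (rule Bochner_Integration.integrable_bound)
    show "integrable M (\<lambda>\<omega>. z^2 * (Y \<omega>)^2)" using Y2 by simp
    show "AE \<omega> in M. norm ((Y \<omega>)^2 * min ((Y \<omega>)^2) (z^2)) \<le> norm (z^2 * (Y \<omega>)^2)"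
      by (intro AE_I2) (simp add: abs_mult mult.commute[of "(Y _)^2"] mult_right_mono)
  qed simp
  then have "ennreal (\<integral>\<omega>. (Y \<omega>)^2 * min ((Y \<omega>)^2) (z^2) \<partial>M)
      = (\<integral>\<^sup>+\<omega>. ennreal ((Y \<omega>)^2 * min ((Y \<omega>)^2) (z^2)) \<partial>M)"
    by (intro nn_integral_eq_integral[symmetric]) auto
  also have "\<dots> = (\<integral>\<^sup>+\<omega>. (\<integral>\<^sup>+u. ennreal (F \<omega> u) \<partial>lborel) \<partial>M)"
    unfolding F_def using z by (simp add: sq_min_sq_eq_nn_integral)
  also have "\<dots> = (\<integral>\<^sup>+u. (\<integral>\<^sup>+\<omega>. ennreal (F \<omega> u) \<partial>M) \<partial>lborel)"
    by (rule Fubini'[symmetric]) (unfold F_def, measurable)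
  finally show "ennreal (\<integral>\<omega>. (Y \<omega>)^2 * min ((Y \<omega>)^2) (z^2) \<partial>M) = integral\<^sup>N lborel g"
    unfolding g_eq .
qed

lemma sq_min_sq_split:
  fixes y z :: real
  assumes "0 \<le> z"
  shows "y^2 * min (y^2) (z^2)
    = y^4 * indicator {x. \<bar>x\<bar> < z} y + z^2 * (y^2 * indicator {x. \<bar>x\<bar> \<ge> z} y)"
proof (cases "\<bar>y\<bar> < z")
  case True
  then have "\<bar>y\<bar>^2 \<le> z^2" by (intro power_mono) auto
  then show ?thesis using True by (simp add: indicator_def min_def eval_nat_numeral)
next
  case False
  then have "z^2 \<le> \<bar>y\<bar>^2" using assms by (intro power_mono) auto
  then show ?thesis using False by (simp add: indicator_def min_def mult.commute)
qed

section \<open>The estimates for the sum of the summands\<close>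

lemma mult_add_le_max_mult:
  fixes a c A B :: real
  assumes "0 \<le> A" "0 \<le> B"
  shows "a * A + c * B \<le> max a c * (A + B)"
proof -
  have "a * A \<le> max a c * A" "c * B \<le> max a c * B"
    using assms by (auto intro: mult_right_mono)
  then show ?thesis by (simp add: distrib_left)
qed

lemma Ln_nonneg: "Ln M X n u \<ge> 0"
  unfolding Ln_def by (intro sum_nonneg integral_nonneg_AE) (auto simp: indicator_def)

context
  fixes M :: "'a measure" and X :: "nat \<Rightarrow> 'a \<Rightarrow> real" and n :: nat
  assumes P: "prob_space M"
    and meas: "\<And>k. k \<in> {1..n} \<Longrightarrow> X k \<in> borel_measurable M"
    and X1: "\<And>k. k \<in> {1..n} \<Longrightarrow> integrable M (X k)"
    and X0: "\<And>k. k \<in> {1..n} \<Longrightarrow> (\<integral>\<omega>. X k \<omega> \<partial>M) = 0"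
    and X2: "\<And>k. k \<in> {1..n} \<Longrightarrow> integrable M (\<lambda>\<omega>. (X k \<omega>)^2)"
    and var_sum: "(\<Sum>k=1..n. sig2 M X k) = 1"
begin

lemma Ln_le_one: "Ln M X n u \<le> 1"
proof -
  have "Ln M X n u \<le> (\<Sum>k=1..n. sig2 M X k)" unfolding Ln_def sig2_def
  proof (intro sum_mono integral_mono)
    fix k assume k: "k \<in> {1..n}"
    show "integrable M (\<lambda>\<omega>. (X k \<omega>)^2 * indicator {x. \<bar>x\<bar> \<ge> u} (X k \<omega>))"
      by (rule integrable_sq_indicator[OF meas[OF k] _ X2[OF k]]) auto
  qed (auto simp: indicator_def X2)
  then show ?thesis using var_sum by simp
qed

lemma abs_Mn_le: "\<bar>Mn M X n u\<bar> \<le> \<bar>u\<bar>"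
proof -
  have "\<bar>Mn M X n u\<bar> \<le> (\<Sum>k=1..n. \<bar>\<integral>\<omega>. (X k \<omega>)^3 * indicator {x. \<bar>x\<bar> < u} (X k \<omega>) \<partial>M\<bar>)"
    unfolding Mn_def by (rule sum_abs)
  also have "\<dots> \<le> (\<Sum>k=1..n. \<bar>u\<bar> * sig2 M X k)"
  proof (intro sum_mono)
    fix k assume k: "k \<in> {1..n}"
    have "\<bar>(X k \<omega>)^3 * indicator {x. \<bar>x\<bar> < u} (X k \<omega>)\<bar> \<le> \<bar>u\<bar> * (X k \<omega>)^2" for \<omega>
      by (cases "\<bar>X k \<omega>\<bar> < u")
        (auto simp: indicator_def abs_mult power_abs eval_nat_numeral intro!: mult_right_mono)
    moreover have "integrable M (\<lambda>\<omega>. (X k \<omega>)^3 * indicator {x. \<bar>x\<bar> < u} (X k \<omega>))"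
      by (rule integrable_power_indicator_abs_less[OF meas[OF k] X2[OF k]]) simp
    ultimately have "(\<integral>\<omega>. \<bar>(X k \<omega>)^3 * indicator {x. \<bar>x\<bar> < u} (X k \<omega>)\<bar> \<partial>M) \<le> (\<integral>\<omega>. \<bar>u\<bar> * (X k \<omega>)^2 \<partial>M)"
      using X2[OF k] by (intro integral_mono) auto
    then have "\<bar>\<integral>\<omega>. (X k \<omega>)^3 * indicator {x. \<bar>x\<bar> < u} (X k \<omega>) \<partial>M\<bar> \<le> (\<integral>\<omega>. \<bar>u\<bar> * (X k \<omega>)^2 \<partial>M)"
      by (rule order_trans[OF integral_abs_bound])
    then show "\<bar>\<integral>\<omega>. (X k \<omega>)^3 * indicator {x. \<bar>x\<bar> < u} (X k \<omega>) \<partial>M\<bar> \<le> \<bar>u\<bar> * sig2 M X k"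
      by (simp add: sig2_def)
  qed
  also have "\<dots> = \<bar>u\<bar>" using var_sum by (simp flip: sum_distrib_left)
  finally show ?thesis .
qed

lemma sum_truncated_fourth_moments_le:
  assumes z: "z > 0" and S: "\<And>u. u \<in> {0<..z} \<Longrightarrow> u * Ln M X n u \<le> S"
  shows "(\<Sum>k=1..n. \<integral>\<omega>. (X k \<omega>)^4 * indicator {x. \<bar>x\<bar> < z} (X k \<omega>) \<partial>M)
           \<le> 2*z*S - z^2 * Ln M X n z"
proof -
  interpret prob_space M by (rule P)
  define L where "L k u = (\<integral>\<omega>. (X k \<omega>)^2 * indicator {x. \<bar>x\<bar> \<ge> u} (X k \<omega>) \<partial>M)" for k u
  define Q where "Q k = (\<integral>\<omega>. (X k \<omega>)^2 * min ((X k \<omega>)^2) (z^2) \<partial>M)" for k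
  note layer_cake = layer_cake_sq_min_sq[OF sigma_finite_measure_axioms meas X2, of _ z, folded L_def Q_def]
  have "0 \<le> z * Ln M X n z" using z Ln_nonneg[of M X n z] by simp
  then have S0: "S \<ge> 0" using S[of z] z by simp
  have "ennreal (\<Sum>k=1..n. Q k) = (\<Sum>k=1..n. ennreal (Q k))"
    unfolding Q_def by (intro sum_ennreal[symmetric] integral_nonneg_AE) auto
  also have "\<dots> = (\<Sum>k=1..n. \<integral>\<^sup>+u. ennreal (2*u * indicator {0..z} u * L k u) \<partial>lborel)"
    using layer_cake(2) z by simp
  also have "\<dots> = (\<integral>\<^sup>+u. (\<Sum>k=1..n. ennreal (2*u * indicator {0..z} u * L k u)) \<partial>lborel)"
    using layer_cake(1) z by (intro nn_integral_sum[symmetric]) auto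
  also have "\<dots> = (\<integral>\<^sup>+u. ennreal (2*u * indicator {0..z} u * Ln M X n u) \<partial>lborel)"
  proof (rule nn_integral_cong)
    fix u :: real
    have "L k u \<ge> 0" for k
      unfolding L_def by (intro integral_nonneg_AE) (auto simp: indicator_def)
    then show "(\<Sum>k=1..n. ennreal (2*u * indicator {0..z} u * L k u)) = ennreal (2*u * indicator {0..z} u * Ln M X n u)"
      by (subst sum_ennreal) (auto simp: indicator_def Ln_def L_def sum_distrib_left)
  qed
  also have "\<dots> \<le> (\<integral>\<^sup>+u. ennreal (2*S) * indicator {0..z} u \<partial>lborel)"
  proof (intro nn_integral_mono)
    fix u :: real
    show "ennreal (2*u * indicator {0..z} u * Ln M X n u) \<le> ennreal (2*S) * indicator {0..z} u"
      using S[of u] by (cases "u \<in> {0<..z}") (auto simp: indicator_def ennreal_leI)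
  qed
  also have "\<dots> = ennreal (2*S) * ennreal z" using z by (simp add: nn_integral_cmult_indicator)
  also have "\<dots> = ennreal (2*z*S)" using S0 z by (simp add: ennreal_mult[symmetric] mult_ac)
  finally have "(\<Sum>k=1..n. Q k) \<le> 2*z*S"
    using S0 z by (simp add: ennreal_le_iff)
  moreover have "Q k = (\<integral>\<omega>. (X k \<omega>)^4 * indicator {x. \<bar>x\<bar> < z} (X k \<omega>) \<partial>M) + z^2 * L k z"
    if k: "k \<in> {1..n}" for k
  proof -
    have "integrable M (\<lambda>\<omega>. (X k \<omega>)^4 * indicator {x. \<bar>x\<bar> < z} (X k \<omega>))"
      by (rule integrable_power_indicator_abs_less[OF meas[OF k] X2[OF k]]) simp
    moreover have "integrable M (\<lambda>\<omega>. (X k \<omega>)^2 * indicator {x. \<bar>x\<bar> \<ge> z} (X k \<omega>))"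
      by (rule integrable_sq_indicator[OF meas[OF k] _ X2[OF k]]) auto
    ultimately show ?thesis
      unfolding Q_def L_def sq_min_sq_split[OF less_imp_le[OF z]] by simp
  qed
  then have "(\<Sum>k=1..n. Q k)
      = (\<Sum>k=1..n. \<integral>\<omega>. (X k \<omega>)^4 * indicator {x. \<bar>x\<bar> < z} (X k \<omega>) \<partial>M) + z^2 * Ln M X n z"
    by (simp add: sum.distrib sum_distrib_left Ln_def L_def)
  ultimately show ?thesis by simp
qed

lemma char_sum_estimate:
  assumes z: "z > 0" and S: "\<And>u. u \<in> {0<..z} \<Longrightarrow> u * Ln M X n u \<le> S"
  shows "cmod (\<Sum>k=1..n. chf M X k t - 1 + complex_of_real (sig2 M X k * t^2 / 2))
     \<le> \<bar>t\<bar>^3/6 * \<bar>Mn M X n z\<bar> + t^4/24 * (2*z*S - z^2 * Ln M X n z) + kappa * t^2 * Ln M X n z"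
proof -
  define A where "A k = (\<integral>\<omega>. (X k \<omega>)^4 * indicator {x. \<bar>x\<bar> < z} (X k \<omega>) \<partial>M)" for k
  define m where "m k = (\<integral>\<omega>. (X k \<omega>)^3 * indicator {x. \<bar>x\<bar> < z} (X k \<omega>) \<partial>M)" for k
  define L where "L k = (\<integral>\<omega>. (X k \<omega>)^2 * indicator {x. \<bar>x\<bar> \<ge> z} (X k \<omega>) \<partial>M)" for k
  define R where "R k = chf M X k t - 1 + complex_of_real (sig2 M X k * t^2 / 2)
                          + \<i> * complex_of_real (t^3/6 * m k)" for k
  have R: "cmod (R k) \<le> t^4/24 * A k + kappa * t^2 * L k" if "k \<in> {1..n}" for k
    using char_second_order_estimate[OF P meas X1 X0 X2, OF that that that that, of t z]
    unfolding R_def chf_def sig2_def A_def m_def L_def .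
  have "(\<Sum>k=1..n. chf M X k t - 1 + complex_of_real (sig2 M X k * t^2 / 2))
      = (\<Sum>k=1..n. R k) - \<i> * complex_of_real (t^3/6 * Mn M X n z)"
    by (simp add: R_def m_def Mn_def sum.distrib sum_distrib_left)
  then have "cmod (\<Sum>k=1..n. chf M X k t - 1 + complex_of_real (sig2 M X k * t^2 / 2))
      \<le> cmod (\<Sum>k=1..n. R k) + cmod (\<i> * complex_of_real (t^3/6 * Mn M X n z))"
    by (simp only: norm_triangle_ineq4)
  also have "\<dots> \<le> (\<Sum>k=1..n. cmod (R k)) + \<bar>t\<bar>^3/6 * \<bar>Mn M X n z\<bar>"
    using norm_sum[of R "{1..n}"] by (simp add: norm_mult norm_power abs_mult power_abs)
  also have "(\<Sum>k=1..n. cmod (R k)) \<le> (\<Sum>k=1..n. t^4/24 * A k + kappa * t^2 * L k)"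
    by (intro sum_mono R)
  also have "\<dots> = t^4/24 * (\<Sum>k=1..n. A k) + kappa * t^2 * Ln M X n z"
    by (simp add: sum.distrib sum_distrib_left Ln_def L_def)
  also have "t^4/24 * (\<Sum>k=1..n. A k) \<le> t^4/24 * (2*z*S - z^2 * Ln M X n z)"
    using sum_truncated_fourth_moments_le[OF z S] by (intro mult_left_mono) (auto simp: A_def)
  finally show ?thesis by linarith
qed

lemma bdd_above_LE3_set:
  "bdd_above ((\<lambda>z. \<gamma> * \<bar>Mn M X n z\<bar> + z * Ln M X n z) ` {0<..\<epsilon>})"
proof (rule bdd_aboveI2)
  fix z assume z: "z \<in> {0<..\<epsilon>}"
  have "\<bar>\<gamma>\<bar> * \<bar>Mn M X n z\<bar> \<le> \<bar>\<gamma>\<bar> * \<epsilon>"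
    using abs_Mn_le[of z] z by (intro mult_left_mono) auto
  then have "\<gamma> * \<bar>Mn M X n z\<bar> \<le> \<bar>\<gamma>\<bar> * \<epsilon>"
    using mult_right_mono[OF abs_ge_self[of \<gamma>] abs_ge_zero[of "Mn M X n z"]] by linarith
  moreover have "z * Ln M X n z \<le> \<epsilon> * 1"
    using Ln_le_one[of z] Ln_nonneg[of M X n z] z by (intro mult_mono) auto
  ultimately show "\<gamma> * \<bar>Mn M X n z\<bar> + z * Ln M X n z \<le> \<bar>\<gamma>\<bar> * \<epsilon> + \<epsilon>" by simp
qed

lemma bdd_above_LR3_set: "bdd_above ((\<lambda>z. z * Ln M X n z) ` {0<..\<epsilon>})"
proof (rule bdd_aboveI2)
  fix z assume z: "z \<in> {0<..\<epsilon>}"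
  show "z * Ln M X n z \<le> \<epsilon> * 1"
    using Ln_le_one[of z] Ln_nonneg[of M X n z] z by (intro mult_mono) auto
qed

lemma char_sum_le_pE_LE3:
  assumes e: "\<epsilon> > 0" and g: "\<gamma> > 0"
  shows "cmod (\<Sum>k=1..n. chf M X k t - 1 + complex_of_real (sig2 M X k * t^2 / 2))
           \<le> pE t \<epsilon> \<gamma> * LE3 M X n \<epsilon> \<gamma>"
proof -
  obtain z where z: "z \<in> {0<..\<epsilon>}" and pz: "pE t \<epsilon> \<gamma> = t^2 * pE_aux t \<gamma> z"
    using pE_attained[OF g e] .
  define S where "S = LE3 M X n \<epsilon> \<gamma>"
  have S_ge: "\<gamma> * \<bar>Mn M X n u\<bar> + u * Ln M X n u \<le> S" if "u \<in> {0<..\<epsilon>}" for u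
    unfolding S_def LE3_def by (rule cSUP_upper[OF that bdd_above_LE3_set])
  have Mn0: "0 \<le> \<gamma> * \<bar>Mn M X n u\<bar>" for u using g by simp
  have Ln0: "0 \<le> u * Ln M X n u" if "u > 0" for u using that Ln_nonneg[of M X n u] by simp
  have "u * Ln M X n u \<le> S" if "u \<in> {0<..z}" for u
    using S_ge[of u] Mn0[of u] that z by auto
  then have estimate: "cmod (\<Sum>k=1..n. chf M X k t - 1 + complex_of_real (sig2 M X k * t^2 / 2))
     \<le> \<bar>t\<bar>^3/6 * \<bar>Mn M X n z\<bar> + t^4/24 * (2*z*S - z^2 * Ln M X n z) + kappa * t^2 * Ln M X n z"
    using z by (intro char_sum_estimate) auto
  define a where "a = \<bar>t\<bar>/(6*\<gamma>)"
  define c where "c = kappa/z - z*t^2/24"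
  have "0 \<le> max a c" using g by (simp add: a_def le_max_iff_disj)
  have "\<bar>t\<bar>^3/6 * \<bar>Mn M X n z\<bar> + t^4/24 * (2*z*S - z^2 * Ln M X n z) + kappa * t^2 * Ln M X n z
      = t^2 * (a * (\<gamma> * \<bar>Mn M X n z\<bar>) + c * (z * Ln M X n z) + z*t^2/12 * S)"
    unfolding a_def c_def using g z
    by (simp add: field_simps power2_eq_square power3_eq_cube power4_eq_xxxx abs_mult_self_eq)
  also have "\<dots> \<le> t^2 * (max a c * S + z*t^2/12 * S)"
  proof -
    have "a * (\<gamma> * \<bar>Mn M X n z\<bar>) + c * (z * Ln M X n z)
        \<le> max a c * (\<gamma> * \<bar>Mn M X n z\<bar> + z * Ln M X n z)"
      using Mn0 Ln0 z by (intro mult_add_le_max_mult) auto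
    also have "\<dots> \<le> max a c * S"
      using S_ge[OF z] \<open>0 \<le> max a c\<close> by (intro mult_left_mono)
    finally show ?thesis by (intro mult_left_mono) auto
  qed
  also have "\<dots> = pE t \<epsilon> \<gamma> * S"
    unfolding pz pE_aux_def a_def c_def by (simp add: algebra_simps)
  finally show ?thesis using estimate by (simp add: S_def)
qed

lemma char_sum_le_pR_LR3:
  assumes e: "\<epsilon> > 0" and g: "\<gamma> > 0"
  shows "cmod (\<Sum>k=1..n. chf M X k t - 1 + complex_of_real (sig2 M X k * t^2 / 2))
           \<le> pR t \<epsilon> \<gamma> * LR3 M X n \<epsilon> \<gamma>"
proof -
  define S where "S = (SUP z\<in>{0<..\<epsilon>}. z * Ln M X n z)"
  have S_ge: "u * Ln M X n u \<le> S" if "u \<in> {0<..\<epsilon>}" for u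
    unfolding S_def by (rule cSUP_upper[OF that bdd_above_LR3_set])
  have Ln0: "0 \<le> \<epsilon> * Ln M X n \<epsilon>" using e Ln_nonneg[of M X n \<epsilon>] by simp
  have "0 \<le> S" using S_ge[of \<epsilon>] Ln0 e by simp
  have estimate: "cmod (\<Sum>k=1..n. chf M X k t - 1 + complex_of_real (sig2 M X k * t^2 / 2))
     \<le> \<bar>t\<bar>^3/6 * \<bar>Mn M X n \<epsilon>\<bar> + t^4/24 * (2*\<epsilon>*S - \<epsilon>^2 * Ln M X n \<epsilon>) + kappa * t^2 * Ln M X n \<epsilon>"
    using e S_ge by (intro char_sum_estimate) auto
  define a where "a = \<bar>t\<bar>/(6*\<gamma>)"
  define c where "c = kappa/\<epsilon> - \<epsilon>*t^2/24"
  define b where "b = max (kappa / \<epsilon> + \<epsilon> * t^2 / 24) (\<epsilon> * t^2 / 12)"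
  have "\<bar>t\<bar>^3/6 * \<bar>Mn M X n \<epsilon>\<bar> + t^4/24 * (2*\<epsilon>*S - \<epsilon>^2 * Ln M X n \<epsilon>) + kappa * t^2 * Ln M X n \<epsilon>
      = t^2 * (a * (\<gamma> * \<bar>Mn M X n \<epsilon>\<bar>) + (c * (\<epsilon> * Ln M X n \<epsilon>) + \<epsilon>*t^2/12 * S))"
    unfolding a_def c_def using g e
    by (simp add: field_simps power2_eq_square power3_eq_cube power4_eq_xxxx abs_mult_self_eq)
  also have "\<dots> \<le> t^2 * (a * (\<gamma> * \<bar>Mn M X n \<epsilon>\<bar>) + b * S)"
  proof -
    \<comment> \<open>\<open>c\<close> may be negative; this case is what the entry \<open>\<epsilon> t\<^sup>2/12\<close> of \<open>pR\<close> accounts for.\<close>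
    have "c * (\<epsilon> * Ln M X n \<epsilon>) + \<epsilon>*t^2/12 * S \<le> b * S"
    proof (cases "c \<ge> 0")
      case True
      have "c * (\<epsilon> * Ln M X n \<epsilon>) \<le> c * S" using True S_ge[of \<epsilon>] e by (intro mult_left_mono) auto
      moreover have "(c + \<epsilon>*t^2/12) * S \<le> b * S"
        using \<open>0 \<le> S\<close> unfolding b_def c_def by (intro mult_right_mono) auto
      ultimately show ?thesis by (simp add: algebra_simps)
    next
      case False
      then have "c * (\<epsilon> * Ln M X n \<epsilon>) \<le> 0" using Ln0 by (simp add: mult_nonpos_nonneg)
      moreover have "\<epsilon>*t^2/12 * S \<le> b * S"
        using \<open>0 \<le> S\<close> unfolding b_def by (intro mult_right_mono) auto
      ultimately show ?thesis by simp
    qed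
    then show ?thesis by (intro mult_left_mono) auto
  qed
  also have "\<dots> \<le> t^2 * (max a b * (\<gamma> * \<bar>Mn M X n \<epsilon>\<bar> + S))"
    using g \<open>0 \<le> S\<close> by (intro mult_left_mono mult_add_le_max_mult) auto
  also have "\<dots> = pR t \<epsilon> \<gamma> * LR3 M X n \<epsilon> \<gamma>"
    unfolding pR_def LR3_def S_def[symmetric] a_def b_def by simp
  finally show ?thesis using estimate by simp
qed

end

theorem lemma6:
  fixes M :: "'a measure" and X :: "nat \<Rightarrow> 'a \<Rightarrow> real" and n :: nat
  assumes "prob_space M"
    and "\<And>k. k \<in> {1..n} \<Longrightarrow> X k \<in> borel_measurable M"
    and "prob_space.indep_vars M (\<lambda>_. borel) X {1..n}"
    and "\<And>k. k \<in> {1..n} \<Longrightarrow> integrable M (X k)"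
    and "\<And>k. k \<in> {1..n} \<Longrightarrow> (\<integral>\<omega>. X k \<omega> \<partial>M) = 0"
    and "\<And>k. k \<in> {1..n} \<Longrightarrow> integrable M (\<lambda>\<omega>. (X k \<omega>)^2)"
    and "(\<Sum>k=1..n. sig2 M X k) = 1"
  shows
    "(\<forall>t \<epsilon> \<gamma>. \<epsilon> > 0 \<longrightarrow> \<gamma> > 0 \<longrightarrow>
        cmod (\<Sum>k=1..n. chf M X k t - 1 + complex_of_real (sig2 M X k * t^2 / 2))
          \<le> pE t \<epsilon> \<gamma> * LE3 M X n \<epsilon> \<gamma>)
   \<and> (\<forall>t \<epsilon> \<gamma>. \<epsilon> > 0 \<longrightarrow> \<gamma> > 0 \<longrightarrow>
        cmod (\<Sum>k=1..n. chf M X k t - 1 + complex_of_real (sig2 M X k * t^2 / 2))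
          \<le> pR t \<epsilon> \<gamma> * LR3 M X n \<epsilon> \<gamma>)
   \<and> (\<forall>t \<epsilon> \<gamma>. \<epsilon> > 0 \<longrightarrow> \<gamma> > 0 \<longrightarrow>
        (\<exists>z\<in>{0<..\<epsilon>}. pE t \<epsilon> \<gamma> = t^2 * pE_aux t \<gamma> z))
   \<and> (\<forall>t \<epsilon> \<gamma>. \<epsilon> > 0 \<longrightarrow> \<gamma> > 0 \<longrightarrow>
        pE t \<epsilon> \<gamma> = (if \<epsilon> * \<bar>t\<bar> \<le> t_gam \<gamma>
                        then kappa * t^2 / \<epsilon> + \<epsilon> * t^4 / 24
                        else sqrt (6 * kappa * \<gamma>^2 + 1) / (6 * \<gamma>) * \<bar>t\<bar>^3))
   \<and> (\<forall>t \<epsilon> \<gamma>. \<epsilon> > 0 \<longrightarrow> \<gamma> \<ge> gamma_star \<longrightarrow>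
        pR t \<epsilon> \<gamma> = (if \<epsilon> * \<bar>t\<bar> \<le> t_inf
                        then kappa * t^2 / \<epsilon> + \<epsilon> * t^4 / 24
                        else \<epsilon> * t^4 / 12))
   \<and> (\<forall>t \<epsilon> \<gamma>. \<epsilon> > 0 \<longrightarrow> \<gamma> > 0 \<longrightarrow> \<gamma> < gamma_star \<longrightarrow>
        pR t \<epsilon> \<gamma> = (if \<epsilon> * \<bar>t\<bar> \<le> t1_gam \<gamma>
                        then kappa * t^2 / \<epsilon> + \<epsilon> * t^4 / 24
                        else if \<epsilon> * \<bar>t\<bar> \<le> t2_gam \<gamma>
                        then \<bar>t\<bar>^3 / (6 * \<gamma>)
                        else \<epsilon> * t^4 / 12))
   \<and> (\<forall>t \<epsilon> \<gamma>. \<epsilon> > 0 \<longrightarrow> \<gamma> > 0 \<longrightarrow> pR t \<epsilon> \<gamma> = pR t \<epsilon> (min \<gamma> gamma_star))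
   \<and> mono_on {0<..} t_gam
   \<and> mono_on {0<..} t1_gam
   \<and> (\<forall>\<gamma>>0. t_gam \<gamma> \<le> t1_gam \<gamma> \<and> t1_gam \<gamma> \<le> t_inf)
   \<and> (\<forall>t \<epsilon> \<gamma>1 \<gamma>2. \<epsilon> > 0 \<longrightarrow> 0 < \<gamma>1 \<longrightarrow> \<gamma>1 \<le> \<gamma>2 \<longrightarrow>
        pE t \<epsilon> \<gamma>2 \<le> pE t \<epsilon> \<gamma>1 \<and> pR t \<epsilon> \<gamma>2 \<le> pR t \<epsilon> \<gamma>1)
   \<and> (\<forall>t \<epsilon> \<gamma>1 \<gamma>2. \<epsilon> > 0 \<longrightarrow> gamma_star \<le> \<gamma>1 \<longrightarrow> gamma_star \<le> \<gamma>2 \<longrightarrow>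
        pR t \<epsilon> \<gamma>1 = pR t \<epsilon> \<gamma>2)
   \<and> (\<forall>t \<epsilon>1 \<epsilon>2 \<gamma>. \<gamma> > 0 \<longrightarrow> 0 < \<epsilon>1 \<longrightarrow> \<epsilon>1 \<le> \<epsilon>2 \<longrightarrow>
        pE t \<epsilon>2 \<gamma> \<le> pE t \<epsilon>1 \<gamma>)"
proof -
  have attained: "\<exists>z\<in>{0<..\<epsilon>}. pE t \<epsilon> \<gamma> = t^2 * pE_aux t \<gamma> z" if "\<epsilon> > 0" "\<gamma> > 0" for t \<epsilon> \<gamma>
    using pE_attained[OF that(2,1)] by blast
  show ?thesis
    by (intro conjI allI impI mono_onI;
        rule char_sum_le_pE_LE3[OF assms(1,2,4-7)] char_sum_le_pR_LR3[OF assms(1,2,4-7)]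
          attained pE_closed_form pR_large_gamma pR_small_gamma pR_eq_pR_min_gamma_star
          t_gam_mono t1_gam_mono t_gam_le_t1_gam t1_gam_le_t_inf pE_antimono_gamma
          pR_antimono_gamma pR_const_large_gamma pE_antimono_eps;
        simp)
qed

end
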